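(* Let $(\mathcal{A},m)$ be a multiarrangement and fix a hyperplane $H_0\in \mathcal{A}$ with $H_0=\ker \alpha_{H_0}$. If $\delta\in D_0^p(\mathcal{A},m)$, then $\delta|_{H_0} \in D^p(\mathcal{A}^{H_0},m^{H_0})$. In particular, this gives well-defined restriction maps $\mathrm{res}_{H_0}^p : D_0^p (\mathcal{A},m) \rightarrow D^p (\mathcal{A}^{H_0},m^{H_0})$, $\delta\mapsto\delta|_{H_0}$.
   Context: Let $V=\mathbb{K}^\ell$, $S=\mathbb{K}[x_1,\ldots,x_\ell]$, and let $(\mathcal{A},m)$ be a multiarrangement (a finite set of linear hyperplanes $\mathcal{A}$ in $V$ with multiplicity $m:\mathcal{A}\to\mathbb{Z}_{>0}$), each $H\in\mathcal{A}$ having defining linear form $\alpha_H$. For $p\ge1$, $\mathrm{Der}^p(S)$ is the $S$-module of alternating $p$-linear forms $S^p\to S$ that are $\mathbb{K}$-derivations in each variable, and $D^p(\mathcal{A},m)=\{\theta\in \mathrm{Der}^p(S)\mid \theta(\alpha_H,f_2,\ldots,f_p)\in\alpha_H^{m(H)}S \text{ for all } H\in\mathcal{A},\ f_i\in S\}$. For fixed $H_0\in\mathcal{A}$, $D_0^p(\mathcal{A},m):=\{\delta\in D^p(\mathcal{A},m)\mid \delta(\alpha_{H_0},f_2,\ldots,f_p)=0 \text{ for all } f_i\in S\}$. The multi-Ziegler restriction $(\mathcal{A}^{H_0},m^{H_0})$ is the multiarrangement in $H_0$ given by $\mathcal{A}^{H_0}=\{H_0\cap H\mid H\in\mathcal{A}\setminus\{H_0\}\}$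 and $m^{H_0}(X)=\sum_{H\in\mathcal{A}_X\setminus\{H_0\}} m(H)$, where $\mathcal{A}_X=\{H\in\mathcal{A}\mid X\subseteq H\}$; its derivation modules $D^p(\mathcal{A}^{H_0},m^{H_0})$ are defined analogously over $\overline{S}=S/\alpha_{H_0}S$. Here $\delta|_{H_0}$ denotes the derivation over $\overline{S}$ obtained by reducing the values of $\delta$ modulo $\alpha_{H_0}$. *)

theory Defs
  imports "HOL-Library.Poly_Mapping"
begin

text \<open>Polynomial ring S = K[x_i | i :: 'n] (ell = CARD('n) variables), as finitely
  supported maps from monomials (exponent vectors) to coefficients.\<close>
type_synonym ('n, 'k) mpoly = "('n \<Rightarrow>\<^sub>0 nat) \<Rightarrow>\<^sub>0 'k"

definition const_poly :: "'k::zero \<Rightarrow> ('n, 'k) mpoly" where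
  "const_poly c = Poly_Mapping.single 0 c"

definition lin_poly :: "('n::finite \<Rightarrow> 'k::comm_ring_1) \<Rightarrow> ('n, 'k) mpoly" where
  "lin_poly a = (\<Sum>i\<in>UNIV. Poly_Mapping.single (Poly_Mapping.single i 1) (a i))"

definition lin_ker :: "('n::finite \<Rightarrow> 'k::comm_ring_1) \<Rightarrow> ('n \<Rightarrow> 'k) set" where
  "lin_ker a = {v. (\<Sum>i\<in>UNIV. a i * v i) = 0}"

text \<open>A p-derivation of the quotient ring S / a S, given on representatives:
  theta : S^p -> S (arguments as lists of length p) induces a well-defined map
  (S/aS)^p -> S/aS which is alternating, K-linear and a K-derivation in each argument.\<close>
definition der_mod :: "('n, 'k::field) mpoly \<Rightarrow> nat \<Rightarrow> (('n, 'k) mpoly list \<Rightarrow> ('n, 'k) mpoly) \<Rightarrow> bool" where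
  "der_mod a p \<theta> \<longleftrightarrow>
     (\<forall>fs gs. length fs = p \<and> length gs = p \<and> (\<forall>i<p. a dvd (fs ! i - gs ! i))
        \<longrightarrow> a dvd (\<theta> fs - \<theta> gs)) \<and>
     (\<forall>fs i f g (c::'k). length fs = p \<and> i < p \<longrightarrow>
        a dvd (\<theta> (fs[i := const_poly c * f + g]) - (const_poly c * \<theta> (fs[i := f]) + \<theta> (fs[i := g])))) \<and>
     (\<forall>fs i f g. length fs = p \<and> i < p \<longrightarrow>
        a dvd (\<theta> (fs[i := f * g]) - (f * \<theta> (fs[i := g]) + g * \<theta> (fs[i := f])))) \<and>
     (\<forall>fs i j. length fs = p \<and> i < p \<and> j < p \<and> i \<noteq> j \<and> fs ! i = fs ! j \<longrightarrow> a dvd \<theta> fs)"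

definition der_p :: "nat \<Rightarrow> (('n, 'k::field) mpoly list \<Rightarrow> ('n, 'k) mpoly) \<Rightarrow> bool" where
  "der_p p \<theta> \<longleftrightarrow>
     (\<forall>fs i f g (c::'k). length fs = p \<and> i < p \<longrightarrow>
        \<theta> (fs[i := const_poly c * f + g]) = const_poly c * \<theta> (fs[i := f]) + \<theta> (fs[i := g])) \<and>
     (\<forall>fs i f g. length fs = p \<and> i < p \<longrightarrow>
        \<theta> (fs[i := f * g]) = f * \<theta> (fs[i := g]) + g * \<theta> (fs[i := f])) \<and>
     (\<forall>fs i j. length fs = p \<and> i < p \<and> j < p \<and> i \<noteq> j \<and> fs ! i = fs ! j \<longrightarrow> \<theta> fs = 0)"

definition multiarr :: "('n::finite \<Rightarrow> 'k::field) set set \<Rightarrow> (('n \<Rightarrow> 'k) set \<Rightarrow> 'n \<Rightarrow> 'k)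
    \<Rightarrow> (('n \<Rightarrow> 'k) set \<Rightarrow> nat) \<Rightarrow> bool" where
  "multiarr A alpha m \<longleftrightarrow> finite A \<and>
     (\<forall>H\<in>A. (\<exists>i. alpha H i \<noteq> 0) \<and> H = lin_ker (alpha H) \<and> m H > 0)"

definition D_p :: "('n::finite \<Rightarrow> 'k::field) set set \<Rightarrow> (('n \<Rightarrow> 'k) set \<Rightarrow> 'n \<Rightarrow> 'k)
    \<Rightarrow> (('n \<Rightarrow> 'k) set \<Rightarrow> nat) \<Rightarrow> nat \<Rightarrow> (('n, 'k) mpoly list \<Rightarrow> ('n, 'k) mpoly) set" where
  "D_p A alpha m p = {\<theta>. der_p p \<theta> \<and>
     (\<forall>H\<in>A. \<forall>fs. length fs = p \<and> fs ! 0 = lin_poly (alpha H)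
         \<longrightarrow> lin_poly (alpha H) ^ m H dvd \<theta> fs)}"

definition D0_p :: "('n::finite \<Rightarrow> 'k::field) set set \<Rightarrow> (('n \<Rightarrow> 'k) set \<Rightarrow> 'n \<Rightarrow> 'k)
    \<Rightarrow> (('n \<Rightarrow> 'k) set \<Rightarrow> nat) \<Rightarrow> ('n \<Rightarrow> 'k) set \<Rightarrow> nat
    \<Rightarrow> (('n, 'k) mpoly list \<Rightarrow> ('n, 'k) mpoly) set" where
  "D0_p A alpha m H0 p = {\<delta>\<in>D_p A alpha m p.
     \<forall>fs. length fs = p \<and> fs ! 0 = lin_poly (alpha H0) \<longrightarrow> \<delta> fs = 0}"

definition restr_arr :: "('n \<Rightarrow> 'k) set set \<Rightarrow> ('n \<Rightarrow> 'k) set \<Rightarrow> ('n \<Rightarrow> 'k) set set" where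
  "restr_arr A H0 = {H0 \<inter> H | H. H \<in> A - {H0}}"

definition restr_mult :: "('n \<Rightarrow> 'k) set set \<Rightarrow> (('n \<Rightarrow> 'k) set \<Rightarrow> nat) \<Rightarrow> ('n \<Rightarrow> 'k) set
    \<Rightarrow> ('n \<Rightarrow> 'k) set \<Rightarrow> nat" where
  "restr_mult A m H0 X = (\<Sum>H\<in>{H\<in>A. X \<subseteq> H \<and> H \<noteq> H0}. m H)"

text \<open>D^p(A^{H0}, m^{H0}) over Sbar = S / alpha_{H0} S, expressed on representatives in S:
  theta (mod alpha_{H0}) is a p-derivation of Sbar, and for every X in A^{H0} and every
  linear form b on V whose restriction to H0 defines X (i.e. H0 \<inter> ker b = X; these give
  all defining linear forms of X in H0 and their linear lifts), theta(b, f2, ..., fp) lies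
  in b^{m^{H0}(X)} Sbar, i.e. in b^{m^{H0}(X)} S + alpha_{H0} S.\<close>
definition D_p_restr :: "('n::finite \<Rightarrow> 'k::field) set set \<Rightarrow> (('n \<Rightarrow> 'k) set \<Rightarrow> 'n \<Rightarrow> 'k)
    \<Rightarrow> (('n \<Rightarrow> 'k) set \<Rightarrow> nat) \<Rightarrow> ('n \<Rightarrow> 'k) set \<Rightarrow> nat
    \<Rightarrow> (('n, 'k) mpoly list \<Rightarrow> ('n, 'k) mpoly) set" where
  "D_p_restr A alpha m H0 p = {\<theta>. der_mod (lin_poly (alpha H0)) p \<theta> \<and>
     (\<forall>X\<in>restr_arr A H0. \<forall>b. H0 \<inter> lin_ker b = X \<longrightarrow>
        (\<forall>fs. length fs = p \<and> fs ! 0 = lin_poly b \<longrightarrow>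
           (\<exists>q r. \<theta> fs = lin_poly b ^ restr_mult A m H0 X * q + lin_poly (alpha H0) * r)))}"

end

theory Submission
  imports Defs
begin

text \<open>A derivation \<open>\<delta>\<close> that vanishes when \<open>\<alpha>\<^sub>H\<^sub>0\<close> is its first argument vanishes whenever
  \<open>\<alpha>\<^sub>H\<^sub>0\<close> is any argument (alternation), so by the Leibniz rule it respects congruence
  modulo \<open>\<alpha>\<^sub>H\<^sub>0\<close> and descends to \<open>S/\<alpha>\<^sub>H\<^sub>0S\<close>.
  Now let \<open>X = H\<^sub>0 \<inter> ker b\<close>. Every \<open>H \<noteq> H\<^sub>0\<close> of \<open>\<A>\<close> containing \<open>X\<close> has
  \<open>\<alpha>\<^sub>H = s b + t \<alpha>\<^sub>H\<^sub>0\<close> with \<open>s \<noteq> 0\<close>, so \<open>\<delta>(\<alpha>\<^sub>H, f\<^sub>2, \<dots>) = s \<delta>(b, f\<^sub>2, \<dots>)\<close> and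
  \<open>\<alpha>\<^sub>H\<^bsup>m(H)\<^esup>\<close> divides \<open>\<delta>(b, f\<^sub>2, \<dots>)\<close>. Distinct hyperplanes give non-associate linear
  forms, which are prime in \<open>S\<close>, so the product of these powers divides \<open>\<delta>(b, f\<^sub>2, \<dots>)\<close>;
  modulo \<open>\<alpha>\<^sub>H\<^sub>0\<close> this product is a constant multiple of \<open>b\<^bsup>m\<^sup>H\<^sup>0(X)\<^esup>\<close>.\<close>

section \<open>Polynomials, substitution and linear forms\<close>

lemma const_poly_mult: "const_poly (a * b) = (const_poly a * const_poly b :: ('n, 'k::comm_ring_1) mpoly)"
  unfolding const_poly_def by (simp add: mult_single)

lemma const_poly_add: "const_poly (a + b) = (const_poly a + const_poly b :: ('n, 'k::comm_ring_1) mpoly)"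
  unfolding const_poly_def by (simp add: single_add)

lemma const_poly_0 [simp]: "const_poly 0 = 0"
  unfolding const_poly_def by simp

lemma const_poly_1 [simp]: "const_poly 1 = 1"
  unfolding const_poly_def by simp

lemma const_poly_mult_single_1: "const_poly c * Poly_Mapping.single \<mu> 1 = Poly_Mapping.single \<mu> (c::'k::comm_ring_1)"
  unfolding const_poly_def by (simp add: mult_single)

lemma poly_mapping_sum_single:
  "f = (\<Sum>\<mu>\<in>Poly_Mapping.keys f. Poly_Mapping.single \<mu> (Poly_Mapping.lookup f \<mu>))"
  by (rule poly_mapping_eqI) (auto simp: lookup_sum lookup_single when_def in_keys_iff)

definition mpoly_var :: "'n \<Rightarrow> ('n, 'k::comm_ring_1) mpoly" where
  "mpoly_var i = Poly_Mapping.single (Poly_Mapping.single i 1) 1"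

lemma mpoly_var_power:
  "mpoly_var i ^ n = (Poly_Mapping.single (Poly_Mapping.single i n) 1 :: ('n, 'k::comm_ring_1) mpoly)"
  by (induction n) (simp_all add: mpoly_var_def mult_single single_add[symmetric] mult.commute)

lemma prod_single_1:
  "(\<Prod>i\<in>S. Poly_Mapping.single (\<mu> i) (1::'k::comm_ring_1)) = Poly_Mapping.single (sum \<mu> S) 1"
  by (induction S rule: infinite_finite_induct) (simp_all add: mult_single add.commute)

lemma lin_poly_eq_sum_var: "lin_poly a = (\<Sum>i\<in>UNIV. const_poly (a i) * mpoly_var i)"
  unfolding lin_poly_def mpoly_var_def const_poly_mult_single_1 ..

lemma lin_poly_lincomb:
  "lin_poly (\<lambda>i. c * a i + d * b i) = const_poly c * lin_poly a + const_poly d * lin_poly b"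
  unfolding lin_poly_eq_sum_var
  by (simp add: sum_distrib_left sum.distrib const_poly_add const_poly_mult algebra_simps)

lemma lookup_lin_poly_var: "Poly_Mapping.lookup (lin_poly a) (Poly_Mapping.single j 1) = a j"
proof -
  have "Poly_Mapping.single i (1::nat) = Poly_Mapping.single j 1 \<longleftrightarrow> i = j" for i
    by (metis lookup_single_eq lookup_single_not_eq zero_neq_one)
  thus ?thesis unfolding lin_poly_def lookup_sum lookup_single when_def by simp
qed

lemma lin_poly_eq_0D: "lin_poly a = 0 \<Longrightarrow> a j = 0"
  by (metis lookup_lin_poly_var lookup_zero)

lemma lin_ker_scale: "t \<noteq> 0 \<Longrightarrow> lin_ker (\<lambda>i. t * a i) = lin_ker (a::'n::finite \<Rightarrow> 'k::field)"
  unfolding lin_ker_def by (simp add: mult.assoc sum_distrib_left[symmetric])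

definition monom_eval :: "('n::finite \<Rightarrow> 'r::comm_monoid_mult) \<Rightarrow> ('n \<Rightarrow>\<^sub>0 nat) \<Rightarrow> 'r" where
  "monom_eval \<sigma> \<mu> = (\<Prod>i\<in>UNIV. \<sigma> i ^ Poly_Mapping.lookup \<mu> i)"

definition mpoly_subst :: "('n::finite \<Rightarrow> ('m, 'k::comm_ring_1) mpoly) \<Rightarrow> ('n, 'k) mpoly \<Rightarrow> ('m, 'k) mpoly" where
  "mpoly_subst \<sigma> f =
     (\<Sum>\<mu>\<in>Poly_Mapping.keys f. const_poly (Poly_Mapping.lookup f \<mu>) * monom_eval \<sigma> \<mu>)"

lemma monom_eval_add: "monom_eval \<sigma> (\<mu> + \<nu>) = monom_eval \<sigma> \<mu> * monom_eval \<sigma> \<nu>"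
  unfolding monom_eval_def by (simp add: lookup_add power_add prod.distrib)

lemma monom_eval_single_1: "monom_eval \<sigma> (Poly_Mapping.single i 1) = \<sigma> i"
proof -
  have "monom_eval \<sigma> (Poly_Mapping.single i 1) = (\<Prod>j\<in>UNIV. if j = i then \<sigma> i else 1)"
    unfolding monom_eval_def by (intro prod.cong) (auto simp: lookup_single when_def)
  thus ?thesis by simp
qed

lemma monom_eval_var: "monom_eval mpoly_var \<mu> = (Poly_Mapping.single \<mu> 1 :: ('n::finite, 'k::comm_ring_1) mpoly)"
proof -
  have "\<mu> = (\<Sum>i\<in>UNIV. Poly_Mapping.single i (Poly_Mapping.lookup \<mu> i))"
    by (rule poly_mapping_eqI) (simp add: lookup_sum lookup_single when_def)
  thus ?thesis unfolding monom_eval_def mpoly_var_power prod_single_1 by simp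
qed

lemma mpoly_subst_conv_sum:
  assumes "finite K" "Poly_Mapping.keys f \<subseteq> K"
  shows "mpoly_subst \<sigma> f = (\<Sum>\<mu>\<in>K. const_poly (Poly_Mapping.lookup f \<mu>) * monom_eval \<sigma> \<mu>)"
  unfolding mpoly_subst_def
  by (rule sum.mono_neutral_left) (use assms in \<open>auto simp: in_keys_iff\<close>)

lemma mpoly_subst_0 [simp]: "mpoly_subst \<sigma> 0 = 0"
  unfolding mpoly_subst_def by simp

lemma mpoly_subst_add: "mpoly_subst \<sigma> (f + g) = mpoly_subst \<sigma> f + mpoly_subst \<sigma> g"
proof -
  let ?K = "Poly_Mapping.keys f \<union> Poly_Mapping.keys g"
  have "mpoly_subst \<sigma> (f + g) = (\<Sum>\<mu>\<in>?K. const_poly (Poly_Mapping.lookup (f + g) \<mu>) * monom_eval \<sigma> \<mu>)"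
    by (rule mpoly_subst_conv_sum[OF _ keys_add]) simp
  also have "\<dots> = (\<Sum>\<mu>\<in>?K. const_poly (Poly_Mapping.lookup f \<mu>) * monom_eval \<sigma> \<mu>)
                + (\<Sum>\<mu>\<in>?K. const_poly (Poly_Mapping.lookup g \<mu>) * monom_eval \<sigma> \<mu>)"
    by (simp add: lookup_add const_poly_add distrib_right sum.distrib)
  also have "\<dots> = mpoly_subst \<sigma> f + mpoly_subst \<sigma> g"
    using mpoly_subst_conv_sum[of ?K f \<sigma>] mpoly_subst_conv_sum[of ?K g \<sigma>] by simp
  finally show ?thesis .
qed

lemma mpoly_subst_sum: "mpoly_subst \<sigma> (sum F S) = (\<Sum>x\<in>S. mpoly_subst \<sigma> (F x))"
  by (induction S rule: infinite_finite_induct) (auto simp: mpoly_subst_add)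

lemma mpoly_subst_single: "mpoly_subst \<sigma> (Poly_Mapping.single \<mu> c) = const_poly c * monom_eval \<sigma> \<mu>"
  by (cases "c = 0") (simp_all add: mpoly_subst_def)

lemma mpoly_subst_mult: "mpoly_subst \<sigma> (f * g) = mpoly_subst \<sigma> f * mpoly_subst \<sigma> g"
proof -
  let ?c = "\<lambda>h \<mu>. Poly_Mapping.lookup h \<mu>"
  have "f * g = (\<Sum>\<mu>\<in>Poly_Mapping.keys f. \<Sum>\<nu>\<in>Poly_Mapping.keys g.
                   Poly_Mapping.single (\<mu> + \<nu>) (?c f \<mu> * ?c g \<nu>))"
    by (subst (1 2) poly_mapping_sum_single) (simp add: sum_product mult_single)
  hence "mpoly_subst \<sigma> (f * g) = (\<Sum>\<mu>\<in>Poly_Mapping.keys f. \<Sum>\<nu>\<in>Poly_Mapping.keys g.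
                   const_poly (?c f \<mu> * ?c g \<nu>) * monom_eval \<sigma> (\<mu> + \<nu>))"
    by (simp add: mpoly_subst_sum mpoly_subst_single)
  also have "\<dots> = (\<Sum>\<mu>\<in>Poly_Mapping.keys f. \<Sum>\<nu>\<in>Poly_Mapping.keys g.
                   const_poly (?c f \<mu>) * monom_eval \<sigma> \<mu> * (const_poly (?c g \<nu>) * monom_eval \<sigma> \<nu>))"
    by (intro sum.cong refl) (simp only: const_poly_mult monom_eval_add ac_simps)
  also have "\<dots> = mpoly_subst \<sigma> f * mpoly_subst \<sigma> g"
    by (simp only: mpoly_subst_def sum_product)
  finally show ?thesis .
qed

lemma mpoly_subst_const: "mpoly_subst \<sigma> (const_poly c) = const_poly c"
  by (simp add: const_poly_def mpoly_subst_single monom_eval_def)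

lemma mpoly_subst_var: "mpoly_subst \<sigma> (mpoly_var i) = \<sigma> i"
  unfolding mpoly_var_def mpoly_subst_single monom_eval_single_1 by simp

lemma mpoly_subst_lin_poly: "mpoly_subst \<sigma> (lin_poly a) = (\<Sum>i\<in>UNIV. const_poly (a i) * \<sigma> i)"
  unfolding lin_poly_eq_sum_var mpoly_subst_sum mpoly_subst_mult mpoly_subst_const mpoly_subst_var ..

lemma mpoly_subst_var_id: "mpoly_subst mpoly_var f = f"
  unfolding mpoly_subst_def monom_eval_var const_poly_mult_single_1
  using poly_mapping_sum_single[of f] by simp

lemma dvd_prod_diff:
  fixes x y :: "'i \<Rightarrow> 'r::comm_ring_1"
  shows "(\<And>i. i \<in> S \<Longrightarrow> l dvd x i - y i) \<Longrightarrow> l dvd prod x S - prod y S"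
proof (induction S rule: infinite_finite_induct)
  case (insert i F)
  have "prod x (insert i F) - prod y (insert i F) = x i * (prod x F - prod y F) + (x i - y i) * prod y F"
    using insert by (simp add: algebra_simps)
  thus ?case using insert by (simp add: dvd_add dvd_mult)
qed auto

lemma dvd_power_diff: "(l::'r::comm_ring_1) dvd x - y \<Longrightarrow> l dvd x ^ n - y ^ n"
  using dvd_prod_diff[of "{..<n}" l "\<lambda>_. x" "\<lambda>_. y"] by simp

lemma dvd_mpoly_subst_diff:
  assumes "\<And>i. l dvd \<sigma> i - \<tau> i"
  shows "l dvd mpoly_subst \<sigma> f - mpoly_subst \<tau> f"
proof -
  have "l dvd monom_eval \<sigma> \<mu> - monom_eval \<tau> \<mu>" for \<mu>
    unfolding monom_eval_def by (rule dvd_prod_diff) (simp add: dvd_power_diff assms)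
  moreover have "mpoly_subst \<sigma> f - mpoly_subst \<tau> f = (\<Sum>\<mu>\<in>Poly_Mapping.keys f.
      const_poly (Poly_Mapping.lookup f \<mu>) * (monom_eval \<sigma> \<mu> - monom_eval \<tau> \<mu>))"
    unfolding mpoly_subst_def by (simp add: sum_subtractf algebra_simps)
  ultimately show ?thesis by (simp add: dvd_sum dvd_mult)
qed

section \<open>Integrality of the polynomial ring\<close>

text \<open>The library's \<open>idom\<close> instance needs linearly ordered variables, so we
  rename the finitely many variables injectively into \<open>nat\<close>.\<close>

definition push_monom :: "('n \<Rightarrow> nat) \<Rightarrow> ('n::finite \<Rightarrow>\<^sub>0 nat) \<Rightarrow> (nat \<Rightarrow>\<^sub>0 nat)" where
  "push_monom e \<mu> = (\<Sum>i\<in>UNIV. Poly_Mapping.single (e i) (Poly_Mapping.lookup \<mu> i))"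

lemma lookup_push_monom: "inj e \<Longrightarrow> Poly_Mapping.lookup (push_monom e \<mu>) (e i) = Poly_Mapping.lookup \<mu> i"
  unfolding push_monom_def lookup_sum by (simp add: lookup_single when_def inj_eq)

lemma push_monom_inj: "inj e \<Longrightarrow> push_monom e \<mu> = push_monom e \<nu> \<Longrightarrow> \<mu> = \<nu>"
  by (rule poly_mapping_eqI) (metis lookup_push_monom)

lemma monom_eval_renamed_var:
  "monom_eval (\<lambda>i. mpoly_var (e i) :: (nat, 'k::comm_ring_1) mpoly) \<mu> = Poly_Mapping.single (push_monom e \<mu>) 1"
  unfolding monom_eval_def mpoly_var_power prod_single_1 push_monom_def ..

lemma lookup_mpoly_subst_renamed_var:
  assumes "inj e"
  shows "Poly_Mapping.lookup (mpoly_subst (\<lambda>i. mpoly_var (e i) :: (nat, 'k::comm_ring_1) mpoly) f) (push_monom e \<nu>)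
       = Poly_Mapping.lookup f \<nu>"
proof -
  have "Poly_Mapping.lookup (mpoly_subst (\<lambda>i. mpoly_var (e i) :: (nat, 'k) mpoly) f) (push_monom e \<nu>)
      = (\<Sum>\<mu>\<in>Poly_Mapping.keys f. (Poly_Mapping.lookup f \<mu> when push_monom e \<mu> = push_monom e \<nu>))"
    unfolding mpoly_subst_def monom_eval_renamed_var const_poly_mult_single_1 lookup_sum lookup_single ..
  also have "\<dots> = (\<Sum>\<mu>\<in>Poly_Mapping.keys f. (Poly_Mapping.lookup f \<mu> when \<mu> = \<nu>))"
    using push_monom_inj[OF assms] by (intro sum.cong) (auto simp: when_def)
  also have "\<dots> = Poly_Mapping.lookup f \<nu>"
    by (simp add: when_def in_keys_iff)
  finally show ?thesis .
qed

lemma mpoly_no_zero_divisors: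
  fixes f g :: "('n::finite, 'k::field) mpoly"
  assumes "f * g = 0"
  shows "f = 0 \<or> g = 0"
proof -
  obtain e :: "'n \<Rightarrow> nat" where "inj e"
    using finite_imp_inj_to_nat_seg[of "UNIV :: 'n set"] by auto
  let ?E = "mpoly_subst (\<lambda>i. mpoly_var (e i) :: (nat, 'k) mpoly)"
  have "?E f * ?E g = 0" using assms by (simp add: mpoly_subst_mult[symmetric])
  hence "?E f = 0 \<or> ?E g = 0" by simp
  moreover have "?E h = 0 \<Longrightarrow> h = 0" for h
    by (rule poly_mapping_eqI) (metis lookup_mpoly_subst_renamed_var[OF \<open>inj e\<close>] lookup_zero)
  ultimately show ?thesis by blast
qed

lemma mpoly_mult_left_cancel:
  fixes l f g :: "('n::finite, 'k::field) mpoly"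
  assumes "l \<noteq> 0" "l * f = l * g"
  shows "f = g"
proof -
  have "l * (f - g) = 0" using assms(2) by (simp add: algebra_simps)
  thus ?thesis using mpoly_no_zero_divisors assms(1) by fastforce
qed

section \<open>Linear forms are prime\<close>

text \<open>Replacing \<open>x\<^sub>k\<close> by \<open>x\<^sub>k - l/a\<^sub>k\<close> kills \<open>l = \<Sum>\<^sub>i a\<^sub>i x\<^sub>i\<close> and changes
  every polynomial only by a multiple of \<open>l\<close>.\<close>

definition elim_var :: "('n::finite \<Rightarrow> 'k::field) \<Rightarrow> 'n \<Rightarrow> 'n \<Rightarrow> ('n, 'k) mpoly" where
  "elim_var a k i = (if i = k then mpoly_var k - const_poly (1 / a k) * lin_poly a else mpoly_var i)"

lemma mpoly_subst_elim_var_lin_poly: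
  assumes "a k \<noteq> 0"
  shows "mpoly_subst (elim_var a k) (lin_poly a) = 0"
proof -
  have "mpoly_subst (elim_var a k) (lin_poly a) = (\<Sum>i\<in>UNIV. const_poly (a i) * mpoly_var i
      - (if i = k then const_poly (a k) * const_poly (1 / a k) * lin_poly a else 0))"
    unfolding mpoly_subst_lin_poly elim_var_def by (intro sum.cong) (auto simp: algebra_simps)
  also have "\<dots> = lin_poly a - const_poly (a k * (1 / a k)) * lin_poly a"
    by (simp only: sum_subtractf lin_poly_eq_sum_var const_poly_mult) simp
  also have "\<dots> = 0" using assms by simp
  finally show ?thesis .
qed

lemma mpoly_subst_elim_var_lin_poly_free:
  assumes "g k = 0"
  shows "mpoly_subst (elim_var a k) (lin_poly g) = lin_poly g"
proof -
  have "mpoly_subst (elim_var a k) (lin_poly g) = (\<Sum>i\<in>UNIV. const_poly (g i) * mpoly_var i)"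
    unfolding mpoly_subst_lin_poly using assms by (intro sum.cong) (auto simp: elim_var_def)
  thus ?thesis by (simp only: lin_poly_eq_sum_var)
qed

lemma lin_poly_dvd_diff_elim_var:
  assumes "a k \<noteq> 0"
  shows "lin_poly a dvd f - mpoly_subst (elim_var a k) f"
  using dvd_mpoly_subst_diff[of "lin_poly a" mpoly_var "elim_var a k" f]
  by (simp add: elim_var_def mpoly_subst_var_id)

lemma lin_poly_dvd_mult:
  fixes a :: "'n::finite \<Rightarrow> 'k::field"
  assumes "a k \<noteq> 0" "lin_poly a dvd f * g"
  shows "lin_poly a dvd f \<or> lin_poly a dvd g"
proof -
  obtain h where "f * g = lin_poly a * h" using assms(2) by (auto elim: dvdE)
  hence "mpoly_subst (elim_var a k) f * mpoly_subst (elim_var a k) g = 0"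
    by (metis mpoly_subst_mult mpoly_subst_elim_var_lin_poly[of a k, OF assms(1)] mult_zero_left)
  hence "mpoly_subst (elim_var a k) f = 0 \<or> mpoly_subst (elim_var a k) g = 0"
    by (rule mpoly_no_zero_divisors)
  thus ?thesis using lin_poly_dvd_diff_elim_var[of a k, OF assms(1)] by (metis diff_zero)
qed

lemma lin_poly_dvd_lin_poly:
  fixes a b :: "'n::finite \<Rightarrow> 'k::field"
  assumes "a k \<noteq> 0" "lin_poly a dvd lin_poly b"
  shows "b i = b k / a k * a i"
proof -
  define g where "g i = 1 * b i + (- (b k / a k)) * a i" for i
  have "lin_poly g = const_poly 1 * lin_poly b + const_poly (- (b k / a k)) * lin_poly a"
    unfolding g_def by (rule lin_poly_lincomb)
  hence "lin_poly a dvd lin_poly g" using assms(2) by simp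
  then obtain q where q: "lin_poly g = lin_poly a * q" by (auto elim: dvdE)
  have "g k = 0" using assms(1) by (simp add: g_def)
  hence "lin_poly g = mpoly_subst (elim_var a k) (lin_poly g)"
    by (simp add: mpoly_subst_elim_var_lin_poly_free)
  also have "\<dots> = 0"
    unfolding q mpoly_subst_mult mpoly_subst_elim_var_lin_poly[of a k, OF assms(1)] by simp
  finally have "g i = 0" by (rule lin_poly_eq_0D)
  thus ?thesis by (simp add: g_def)
qed

definition prime_mpoly :: "('n::finite, 'k::field) mpoly \<Rightarrow> bool" where
  "prime_mpoly l \<longleftrightarrow> l \<noteq> 0 \<and> \<not> l dvd 1 \<and> (\<forall>f g. l dvd f * g \<longrightarrow> l dvd f \<or> l dvd g)"

lemma prime_mpoly_lin_poly:
  fixes a :: "'n::finite \<Rightarrow> 'k::field"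
  assumes "a k \<noteq> 0"
  shows "prime_mpoly (lin_poly a)"
  unfolding prime_mpoly_def
proof (intro conjI allI impI)
  show "lin_poly a \<noteq> 0" using assms lin_poly_eq_0D by blast
  show "\<not> lin_poly a dvd 1"
  proof
    assume "lin_poly a dvd 1"
    then obtain q where "1 = lin_poly a * q" by (auto elim: dvdE)
    hence "mpoly_subst (elim_var a k) 1 = mpoly_subst (elim_var a k) (lin_poly a) * mpoly_subst (elim_var a k) q"
      by (metis mpoly_subst_mult)
    hence "mpoly_subst (elim_var a k) 1 = 0"
      by (simp add: mpoly_subst_elim_var_lin_poly[of a k, OF assms])
    thus False by (metis mpoly_subst_const const_poly_1 zero_neq_one)
  qed
qed (use lin_poly_dvd_mult[of a k, OF assms] in blast)

lemma prime_mpoly_dvd_power: "prime_mpoly l \<Longrightarrow> l dvd f ^ n \<Longrightarrow> l dvd f"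
  by (induction n) (auto simp: prime_mpoly_def)

lemma prime_mpoly_power_dvd_cancel:
  fixes l u :: "('n::finite, 'k::field) mpoly"
  assumes "prime_mpoly l" "\<not> l dvd u"
  shows "l ^ n dvd u * g \<Longrightarrow> l ^ n dvd g"
proof (induction n arbitrary: g)
  case (Suc n)
  have "l dvd u * g" using Suc.prems by (metis dvd_mult_left power_Suc)
  hence "l dvd g" using assms unfolding prime_mpoly_def by blast
  then obtain g' where g: "g = l * g'" by (auto elim: dvdE)
  obtain z where "u * g = l ^ Suc n * z" using Suc.prems by (auto elim: dvdE)
  hence "l * (u * g') = l * (l ^ n * z)" using g by (simp add: algebra_simps)
  hence "u * g' = l ^ n * z" using assms(1) mpoly_mult_left_cancel unfolding prime_mpoly_def by blast
  hence "l ^ n dvd g'" using Suc.IH by simp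
  thus ?case using g by (simp add: mult_dvd_mono)
qed simp

lemma prime_mpoly_dvd_prod_powers:
  fixes L :: "'x \<Rightarrow> ('n::finite, 'k::field) mpoly"
  assumes "prime_mpoly l" "finite F" "l dvd (\<Prod>x\<in>F. L x ^ e x)"
  shows "\<exists>x\<in>F. l dvd L x"
  using assms(2,3)
proof (induction F rule: finite_induct)
  case empty thus ?case using assms(1) unfolding prime_mpoly_def by simp
next
  case (insert x F)
  hence "l dvd L x ^ e x \<or> l dvd (\<Prod>x\<in>F. L x ^ e x)"
    using assms(1) unfolding prime_mpoly_def by simp
  thus ?case using insert prime_mpoly_dvd_power[OF assms(1)] by blast
qed

lemma prod_prime_powers_dvd:
  fixes L :: "'x \<Rightarrow> ('n::finite, 'k::field) mpoly"
  assumes "finite B" "\<And>x. x \<in> B \<Longrightarrow> prime_mpoly (L x)"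
    and "\<And>x y. x \<in> B \<Longrightarrow> y \<in> B \<Longrightarrow> x \<noteq> y \<Longrightarrow> \<not> L x dvd L y"
    and "\<And>x. x \<in> B \<Longrightarrow> L x ^ e x dvd f"
  shows "(\<Prod>x\<in>B. L x ^ e x) dvd f"
  using assms
proof (induction B rule: finite_induct)
  case (insert x F)
  then obtain g where g: "f = (\<Prod>x\<in>F. L x ^ e x) * g" by (auto elim: dvdE)
  have "\<not> L x dvd (\<Prod>x\<in>F. L x ^ e x)"
    using prime_mpoly_dvd_prod_powers[of "L x" F L e] insert by blast
  moreover have "L x ^ e x dvd (\<Prod>x\<in>F. L x ^ e x) * g" using insert g by simp
  ultimately have "L x ^ e x dvd g" using prime_mpoly_power_dvd_cancel insert by blast
  thus ?case using g insert(1,2) by (simp add: mult.commute mult_dvd_mono)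
qed simp

lemma dvd_prod_powers_diff:
  fixes L c :: "'i \<Rightarrow> 'r::comm_ring_1"
  assumes "\<And>i. i \<in> S \<Longrightarrow> l dvd L i - c i * x"
  shows "l dvd (\<Prod>i\<in>S. L i ^ e i) - (\<Prod>i\<in>S. c i ^ e i) * x ^ (\<Sum>i\<in>S. e i)"
proof -
  have "l dvd (\<Prod>i\<in>S. L i ^ e i) - (\<Prod>i\<in>S. (c i * x) ^ e i)"
    by (rule dvd_prod_diff) (simp add: dvd_power_diff assms)
  thus ?thesis by (simp only: power_mult_distrib prod.distrib power_sum)
qed

section \<open>Linear algebra of the defining forms\<close>

lemma sum_mult_point: "(\<Sum>x\<in>UNIV. a x * (if x = i then \<alpha> else 0)) = \<alpha> * a i"
  for a :: "'n::finite \<Rightarrow> 'k::comm_semiring_1"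
  by (simp add: if_distrib[of "(*) _"] mult.commute cong: if_cong)

lemma sum_mult_three_points:
  fixes a :: "'n::finite \<Rightarrow> 'k::comm_semiring_1"
  shows "(\<Sum>x\<in>UNIV. a x * ((if x = i then \<alpha> else 0) + (if x = j then \<beta> else 0) + (if x = k then \<gamma> else 0)))
     = \<alpha> * a i + \<beta> * a j + \<gamma> * a k"
  unfolding distrib_left sum.distrib sum_mult_point ..

lemma lin_ker_inter_subset_imp_lincomb:
  fixes a b c :: "'n::finite \<Rightarrow> 'k::field"
  assumes ak: "a k \<noteq> 0" and sub: "lin_ker a \<inter> lin_ker b \<subseteq> lin_ker c"
  shows "\<exists>s t. \<forall>i. c i = s * b i + t * a i"
proof -
  define b1 where "b1 i = b i - b k / a k * a i" for i
  define c1 where "c1 i = c i - c k / a k * a i" for i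
  have minor: "\<alpha> * c1 i + \<beta> * c1 j = 0" if "\<alpha> * b1 i + \<beta> * b1 j = 0" for \<alpha> \<beta> i j
  proof -
    define \<gamma> where "\<gamma> = - (\<alpha> * a i + \<beta> * a j) / a k"
    define v where "v x = (if x = i then \<alpha> else 0) + (if x = j then \<beta> else 0) + (if x = k then \<gamma> else 0)" for x
    have dot: "(\<Sum>x\<in>UNIV. d x * v x) = \<alpha> * d i + \<beta> * d j + \<gamma> * d k" for d
      unfolding v_def by (rule sum_mult_three_points)
    have reduce: "\<alpha> * d i + \<beta> * d j + \<gamma> * d k = \<alpha> * (d i - d k / a k * a i) + \<beta> * (d j - d k / a k * a j)"
      for d using ak by (simp add: \<gamma>_def field_simps)
    have "v \<in> lin_ker a" "v \<in> lin_ker b"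
      using ak that by (simp_all add: lin_ker_def dot reduce b1_def)
    hence "v \<in> lin_ker c" using sub by blast
    thus ?thesis by (simp add: lin_ker_def dot reduce c1_def)
  qed
  show ?thesis
  proof (cases "\<forall>j. b1 j = 0")
    case True
    have "c i = 0 * b i + c k / a k * a i" for i
      using minor[of 1 i 0 i] True by (simp add: c1_def)
    thus ?thesis by blast
  next
    case False
    then obtain j where bj: "b1 j \<noteq> 0" by blast
    define s where "s = c1 j / b1 j"
    have "c1 i = s * b1 i" for i
      using minor[of "b1 j" i "- b1 i" j] bj by (simp add: s_def field_simps)
    hence "c i = s * b i + (c k / a k - s * (b k / a k)) * a i" for i
      by (simp add: b1_def c1_def algebra_simps)
    thus ?thesis by blast
  qed
qed

lemma multiarr_lin_poly_not_dvd:
  assumes "multiarr A alpha m" "H1 \<in> A" "H2 \<in> A" "H1 \<noteq> H2"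
  shows "\<not> lin_poly (alpha H1) dvd lin_poly (alpha H2)"
proof
  assume dvd: "lin_poly (alpha H1) dvd lin_poly (alpha H2)"
  obtain j where j: "alpha H1 j \<noteq> 0" using assms unfolding multiarr_def by blast
  define t where "t = alpha H2 j / alpha H1 j"
  have scale: "alpha H2 = (\<lambda>i. t * alpha H1 i)"
    unfolding t_def using lin_poly_dvd_lin_poly[of "alpha H1" j, OF j dvd] by blast
  hence "t \<noteq> 0" using assms unfolding multiarr_def by fastforce
  hence "lin_ker (alpha H2) = lin_ker (alpha H1)" using scale lin_ker_scale by simp
  thus False using assms unfolding multiarr_def by auto
qed

lemma multiarr_defining_form_lincomb:
  assumes "multiarr A alpha m" "H0 \<in> A" "H \<in> A" "H \<noteq> H0" "H0 \<inter> lin_ker b \<subseteq> H"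
  shows "\<exists>s t. s \<noteq> 0 \<and> alpha H = (\<lambda>i. s * b i + t * alpha H0 i)"
proof -
  note arr = assms(1)[unfolded multiarr_def]
  obtain k where k: "alpha H0 k \<noteq> 0" using arr assms(2) by blast
  have "lin_ker (alpha H0) \<inter> lin_ker b \<subseteq> lin_ker (alpha H)"
    using arr assms(2,3,5) by auto
  then obtain s t where st: "alpha H = (\<lambda>i. s * b i + t * alpha H0 i)"
    using lin_ker_inter_subset_imp_lincomb[of "alpha H0" k, OF k] by blast
  have "s \<noteq> 0"
  proof
    assume "s = 0"
    hence scale: "alpha H = (\<lambda>i. t * alpha H0 i)" using st by simp
    hence "t \<noteq> 0" using arr assms(3) by fastforce
    hence "lin_ker (alpha H) = lin_ker (alpha H0)" using scale lin_ker_scale by simp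
    thus False using arr assms(2-4) by auto
  qed
  thus ?thesis using st by blast
qed

section \<open>Derivations vanishing on a fixed argument\<close>

context
  fixes p :: nat and \<delta> :: "('n::finite, 'k::field) mpoly list \<Rightarrow> ('n, 'k) mpoly"
  assumes der: "der_p p \<delta>"
begin

lemma der_p_linear_update: "length fs = p \<Longrightarrow> i < p \<Longrightarrow>
    \<delta> (fs[i := const_poly c * f + g]) = const_poly c * \<delta> (fs[i := f]) + \<delta> (fs[i := g])"
  using der unfolding der_p_def by blast

lemma der_p_leibniz_update: "length fs = p \<Longrightarrow> i < p \<Longrightarrow>
    \<delta> (fs[i := f * g]) = f * \<delta> (fs[i := g]) + g * \<delta> (fs[i := f])"
  using der unfolding der_p_def by blast

lemma der_p_alternating:
  "length fs = p \<Longrightarrow> i < p \<Longrightarrow> j < p \<Longrightarrow> i \<noteq> j \<Longrightarrow> fs ! i = fs ! j \<Longrightarrow> \<delta> fs = 0"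
  using der unfolding der_p_def by blast

lemma der_p_add_update: "length fs = p \<Longrightarrow> i < p \<Longrightarrow> \<delta> (fs[i := f + g]) = \<delta> (fs[i := f]) + \<delta> (fs[i := g])"
  using der_p_linear_update[of fs i 1 f g] by simp

lemma der_p_smult_update:
  "length fs = p \<Longrightarrow> i < p \<Longrightarrow> \<delta> (fs[i := const_poly c * f]) = const_poly c * \<delta> (fs[i := f])"
  using der_p_linear_update[of fs i c f 0] der_p_add_update[of fs i 0 0] by simp

lemma der_p_swap:
  assumes "length fs = p" "i < p" "j < p" "i \<noteq> j"
  shows "\<delta> (fs[i := f, j := g]) = - \<delta> (fs[i := g, j := f])"
proof -
  define F where "F u v = \<delta> (fs[i := u, j := v])" for u v
  have add_left: "F (u + u') v = F u v + F u' v" for u u' v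
    using der_p_add_update[of "fs[j := v]" i u u'] assms by (simp add: F_def list_update_swap)
  have add_right: "F u (v + v') = F u v + F u v'" for u v v'
    using der_p_add_update[of "fs[i := u]" j v v'] assms by (simp add: F_def)
  have diag: "F u u = 0" for u
    unfolding F_def using assms by (intro der_p_alternating[of _ i j]) auto
  have "0 = F (f + g) (f + g)" by (simp add: diag)
  also have "\<dots> = F f g + F g f" by (simp only: add_left add_right) (simp add: diag)
  finally show ?thesis unfolding F_def by (simp add: eq_neg_iff_add_eq_0)
qed

context
  fixes l :: "('n, 'k) mpoly"
  assumes vanish: "\<And>fs. length fs = p \<and> fs ! 0 = l \<longrightarrow> \<delta> fs = 0"
begin

lemma der_p_vanishes_at:
  assumes "length gs = p" "i < p" "gs ! i = l"
  shows "\<delta> gs = 0"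
proof (cases "i = 0")
  case True thus ?thesis using vanish assms by blast
next
  case False
  have "gs = gs[0 := gs ! 0, i := l]" using assms by (metis list_update_id)
  hence "\<delta> gs = - \<delta> (gs[0 := l, i := gs ! 0])"
    using der_p_swap[of gs 0 i "gs ! 0" l] assms False by simp
  also have "\<delta> (gs[0 := l, i := gs ! 0]) = 0"
    using vanish assms False by simp
  finally show ?thesis by simp
qed

lemma der_p_cong_update:
  assumes "length fs = p" "i < p" "l dvd f - g"
  shows "l dvd \<delta> (fs[i := f]) - \<delta> (fs[i := g])"
proof -
  obtain h where "f - g = l * h" using assms(3) by (auto elim: dvdE)
  hence h: "f = g + l * h" by (metis add.commute diff_eq_eq)
  have "\<delta> (fs[i := l]) = 0"
    using der_p_vanishes_at[of "fs[i := l]" i] assms by simp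
  hence "\<delta> (fs[i := f]) - \<delta> (fs[i := g]) = l * \<delta> (fs[i := h])"
    using der_p_add_update[of fs i g "l * h"] der_p_leibniz_update[of fs i l h] assms h by simp
  thus ?thesis by simp
qed

lemma der_p_cong:
  assumes len: "length fs = p" "length gs = p" and cong: "\<forall>i<p. l dvd fs ! i - gs ! i"
  shows "l dvd \<delta> fs - \<delta> gs"
proof -
  define hs where "hs k = take k gs @ drop k fs" for k
  have "k \<le> p \<Longrightarrow> l dvd \<delta> fs - \<delta> (hs k)" for k
  proof (induction k)
    case 0 thus ?case by (simp add: hs_def)
  next
    case (Suc k)
    hence kp: "k < p" by simp
    have hs_k: "hs k = take k gs @ fs ! k # drop (Suc k) fs"
      unfolding hs_def using kp len by (simp add: Cons_nth_drop_Suc)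
    have hs_Suc_k: "hs (Suc k) = take k gs @ gs ! k # drop (Suc k) fs"
      unfolding hs_def using kp len by (simp add: take_Suc_conv_app_nth)
    have "length (take k gs) = k" using kp len by simp
    hence "hs k = (hs k)[k := fs ! k]" "hs (Suc k) = (hs k)[k := gs ! k]"
      unfolding hs_k hs_Suc_k by (metis list_update_length)+
    moreover have "l dvd \<delta> ((hs k)[k := fs ! k]) - \<delta> ((hs k)[k := gs ! k])"
      using kp len cong by (intro der_p_cong_update) (simp_all add: hs_def)
    ultimately have "l dvd \<delta> (hs k) - \<delta> (hs (Suc k))" by simp
    thus ?case using dvd_add[OF Suc.IH] Suc.prems by fastforce
  qed
  moreover have "hs p = gs" using len by (simp add: hs_def)
  ultimately show ?thesis by auto
qed

lemma der_mod_if_vanishes: "der_mod l p \<delta>"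
  unfolding der_mod_def using der_p_cong der_p_linear_update der_p_leibniz_update der_p_alternating
  by (auto simp del: dvd_diff_commute)

end

end

section \<open>Restriction to \<open>H\<^sub>0\<close>\<close>

lemma D0_p_dvd_of_lincomb:
  assumes "\<delta> \<in> D0_p A alpha m H0 p" "H \<in> A"
    and "alpha H = (\<lambda>i. s * b i + t * alpha H0 i)" "s \<noteq> 0"
    and "length fs = p" "0 < p" "fs ! 0 = lin_poly b"
  shows "lin_poly (alpha H) ^ m H dvd \<delta> fs"
proof -
  have der: "der_p p \<delta>" and vanish: "\<delta> (fs[0 := lin_poly (alpha H0)]) = 0"
    using assms(1,5,6) unfolding D0_p_def D_p_def by auto
  have unchanged: "fs[0 := lin_poly b] = fs" using assms(5-7) by (metis list_update_id)
  have "lin_poly (alpha H) ^ m H dvd \<delta> (fs[0 := lin_poly (alpha H)])"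
    using assms(1,2,5,6) unfolding D0_p_def D_p_def by auto
  also have "\<delta> (fs[0 := lin_poly (alpha H)]) = const_poly s * \<delta> fs"
    using der_p_linear_update[OF der] der_p_smult_update[OF der] assms(5-7) vanish
    by (simp add: assms(3) lin_poly_lincomb unchanged)
  finally have "lin_poly (alpha H) ^ m H dvd const_poly (1 / s) * (const_poly s * \<delta> fs)"
    by (rule dvd_mult)
  thus ?thesis using \<open>s \<noteq> 0\<close> by (simp add: mult.assoc[symmetric] const_poly_mult[symmetric])
qed

lemma D0_p_restriction_dvd:
  assumes arr: "multiarr A alpha m" and "H0 \<in> A" "0 < p" and \<delta>: "\<delta> \<in> D0_p A alpha m H0 p"
    and X: "H0 \<inter> lin_ker b = X" and fs: "length fs = p" "fs ! 0 = lin_poly b"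
  shows "\<exists>q r. \<delta> fs = lin_poly b ^ restr_mult A m H0 X * q + lin_poly (alpha H0) * r"
proof -
  define B where "B = {H\<in>A. X \<subseteq> H \<and> H \<noteq> H0}"
  have "\<forall>H\<in>B. \<exists>s t. s \<noteq> 0 \<and> alpha H = (\<lambda>i. s * b i + t * alpha H0 i)"
    using multiarr_defining_form_lincomb[OF arr \<open>H0 \<in> A\<close>] X unfolding B_def by blast
  then obtain s t where st: "\<And>H. H \<in> B \<Longrightarrow> s H \<noteq> 0 \<and> alpha H = (\<lambda>i. s H * b i + t H * alpha H0 i)"
    by metis
  define P where "P = (\<Prod>H\<in>B. lin_poly (alpha H) ^ m H)"
  have "P dvd \<delta> fs"
    unfolding P_def
  proof (rule prod_prime_powers_dvd)
    show "finite B" using arr unfolding B_def multiarr_def by simp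
    show "prime_mpoly (lin_poly (alpha H))" if "H \<in> B" for H
      using that arr prime_mpoly_lin_poly unfolding B_def multiarr_def by blast
    show "\<not> lin_poly (alpha H1) dvd lin_poly (alpha H2)" if "H1 \<in> B" "H2 \<in> B" "H1 \<noteq> H2" for H1 H2
      using that multiarr_lin_poly_not_dvd[OF arr] unfolding B_def by blast
    show "lin_poly (alpha H) ^ m H dvd \<delta> fs" if "H \<in> B" for H
      using that st D0_p_dvd_of_lincomb[OF \<delta> _ _ _ fs(1) \<open>0 < p\<close> fs(2)] unfolding B_def by blast
  qed
  then obtain h where h: "\<delta> fs = P * h" by (auto elim: dvdE)
  have "lin_poly (alpha H0) dvd P - (\<Prod>H\<in>B. const_poly (s H) ^ m H) * lin_poly b ^ restr_mult A m H0 X"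
    unfolding P_def restr_mult_def B_def[symmetric]
    by (rule dvd_prod_powers_diff) (simp add: st lin_poly_lincomb)
  then obtain r where "P = (\<Prod>H\<in>B. const_poly (s H) ^ m H) * lin_poly b ^ restr_mult A m H0 X
                           + lin_poly (alpha H0) * r"
    by (auto elim: dvdE simp: algebra_simps)
  hence "\<delta> fs = lin_poly b ^ restr_mult A m H0 X * ((\<Prod>H\<in>B. const_poly (s H) ^ m H) * h)
                + lin_poly (alpha H0) * (r * h)"
    unfolding h by (simp add: algebra_simps)
  thus ?thesis by blast
qed

theorem lemma3p2:
  fixes A :: "('n::finite \<Rightarrow> 'k::field) set set"
    and alpha :: "('n \<Rightarrow> 'k) set \<Rightarrow> 'n \<Rightarrow> 'k"
    and m :: "('n \<Rightarrow> 'k) set \<Rightarrow> nat"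
    and H0 :: "('n \<Rightarrow> 'k) set"
    and p :: nat
    and \<delta> :: "('n, 'k) mpoly list \<Rightarrow> ('n, 'k) mpoly"
  assumes "multiarr A alpha m"
    and "H0 \<in> A"
    and "p \<ge> 1"
    and "\<delta> \<in> D0_p A alpha m H0 p"
  shows "\<delta> \<in> D_p_restr A alpha m H0 p"
proof -
  have "der_p p \<delta>" and "\<And>fs. length fs = p \<and> fs ! 0 = lin_poly (alpha H0) \<longrightarrow> \<delta> fs = 0"
    using assms(4) unfolding D0_p_def D_p_def by auto
  hence "der_mod (lin_poly (alpha H0)) p \<delta>" by (rule der_mod_if_vanishes)
  thus ?thesis
    unfolding D_p_restr_def using D0_p_restriction_dvd[OF assms(1,2) _ assms(4)] assms(3) by auto
qed

end
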